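(* Suppose the total preorder $\succeq$ on $\mathcal{Q}_b$ is continuous (with respect to uniform convergence), monotonic, and satisfies the dual independence axiom. Then there exists a nonnegative, bounded, finitely additive measure $\mu$ on $\Sigma$ such that the functional $$U(\Phi)=\int_0^1\Phi(p)\,\mu(dp),\qquad \Phi\in B((0,1],\Sigma),$$ (integral with respect to a finitely additive measure) restricted to $\mathcal{Q}_b$ is a numerical representation of $\succeq$.
   Context: $\mathcal{Q}_b$ is the set of bounded, nondecreasing, left-continuous functions on $(0,1]$. $\Sigma$ is the algebra of subsets of $(0,1]$ generated by finite unions and intersections of intervals $(a,b]$, $0<a<b\le1$. $B((0,1],\Sigma)$ is the Banach space (sup norm) of uniform limits of $\Sigma$-simple functions $\sum\alpha_i\mathbf{1}_{A_i}$. Integration of functions in $B((0,1],\Sigma)$ against a bounded finitely additive measure is in the sense of Dunford–Schwartz. A total preorder is reflexive, transitive, complete; $\succ$ its strict part; continuity means closed upper and lower contour sets. Monotonic: $\Phi\ge\Psi$ pointwise implies $\Phi\succeq\Psi$. Dual independence axiom: $\Phi\succ\Psi$ implies $\alpha\Phi+(1-\alpha)\Upsilon\succ\alpha\Psi+(1-\alpha)\Upsilon$ for all $\Upsilon\in\mathcal{Q}_b$, $\alpha\in(0,1)$. Numerical representation: $\Phi\succ\Psi\iff U(\Phi)>U(\Psi)$. *)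

theory Defs
  imports "HOL-Analysis.Analysis"
begin

text \<open>Functions on (0,1] are represented as real => real; elements of Q_b are
  normalised to vanish outside (0,1].\<close>

definition Qb :: "(real \<Rightarrow> real) set" where
  "Qb = {\<Phi>. bdd_above (abs ` \<Phi> ` {0<..1})
           \<and> mono_on {0<..1} \<Phi>
           \<and> (\<forall>p\<in>{0<..1}. continuous (at_left p) \<Phi>)
           \<and> (\<forall>x. x \<notin> {0<..1} \<longrightarrow> \<Phi> x = 0)}"

inductive_set SigmaAlg :: "real set set" where
  empty: "{} \<in> SigmaAlg"
| interval: "0 < a \<Longrightarrow> a < b \<Longrightarrow> b \<le> 1 \<Longrightarrow> {a<..b} \<in> SigmaAlg"
| compl: "A \<in> SigmaAlg \<Longrightarrow> {0<..1} - A \<in> SigmaAlg"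
| union: "A \<in> SigmaAlg \<Longrightarrow> B \<in> SigmaAlg \<Longrightarrow> A \<union> B \<in> SigmaAlg"
| inter: "A \<in> SigmaAlg \<Longrightarrow> B \<in> SigmaAlg \<Longrightarrow> A \<inter> B \<in> SigmaAlg"

definition fa_measure :: "(real set \<Rightarrow> real) \<Rightarrow> bool" where
  "fa_measure \<mu> \<longleftrightarrow> \<mu> {} = 0
     \<and> (\<forall>A\<in>SigmaAlg. 0 \<le> \<mu> A)
     \<and> (\<exists>M. \<forall>A\<in>SigmaAlg. \<bar>\<mu> A\<bar> \<le> M)
     \<and> (\<forall>A\<in>SigmaAlg. \<forall>B\<in>SigmaAlg. A \<inter> B = {} \<longrightarrow> \<mu> (A \<union> B) = \<mu> A + \<mu> B)"

definition simple_eval :: "(real \<times> real set) list \<Rightarrow> real \<Rightarrow> real" where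
  "simple_eval xs x = (\<Sum>(\<alpha>, A)\<leftarrow>xs. \<alpha> * indicator A x)"

definition simple_int :: "(real set \<Rightarrow> real) \<Rightarrow> (real \<times> real set) list \<Rightarrow> real" where
  "simple_int \<mu> xs = (\<Sum>(\<alpha>, A)\<leftarrow>xs. \<alpha> * \<mu> A)"

text \<open>B((0,1],Sigma): uniform limits of SigmaAlg-simple functions.\<close>
definition Bspace :: "(real \<Rightarrow> real) set" where
  "Bspace = {f. \<forall>\<epsilon>>0. \<exists>xs. set (map snd xs) \<subseteq> SigmaAlg
                 \<and> (\<forall>x\<in>{0<..1}. \<bar>f x - simple_eval xs x\<bar> \<le> \<epsilon>)}"

text \<open>Dunford--Schwartz integral of f in B((0,1],Sigma): the limit of the integrals of
  simple functions converging uniformly to f.\<close>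
definition has_fa_integral :: "(real set \<Rightarrow> real) \<Rightarrow> (real \<Rightarrow> real) \<Rightarrow> real \<Rightarrow> bool" where
  "has_fa_integral \<mu> f c \<longleftrightarrow>
     (\<forall>\<epsilon>>0. \<exists>\<delta>>0. \<forall>xs. set (map snd xs) \<subseteq> SigmaAlg
        \<and> (\<forall>x\<in>{0<..1}. \<bar>f x - simple_eval xs x\<bar> \<le> \<delta>)
        \<longrightarrow> \<bar>c - simple_int \<mu> xs\<bar> \<le> \<epsilon>)"

definition fa_integral :: "(real set \<Rightarrow> real) \<Rightarrow> (real \<Rightarrow> real) \<Rightarrow> real" where
  "fa_integral \<mu> f = (THE c. has_fa_integral \<mu> f c)"

text \<open>Properties of a binary relation R (R x y meaning x \<succeq> y) on Qb.\<close>
definition strict_part :: "('a \<Rightarrow> 'a \<Rightarrow> bool) \<Rightarrow> 'a \<Rightarrow> 'a \<Rightarrow> bool" where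
  "strict_part R x y \<longleftrightarrow> R x y \<and> \<not> R y x"

definition total_preorder_on :: "'a set \<Rightarrow> ('a \<Rightarrow> 'a \<Rightarrow> bool) \<Rightarrow> bool" where
  "total_preorder_on S R \<longleftrightarrow>
     (\<forall>x\<in>S. R x x) \<and> (\<forall>x\<in>S. \<forall>y\<in>S. \<forall>z\<in>S. R x y \<longrightarrow> R y z \<longrightarrow> R x z)
     \<and> (\<forall>x\<in>S. \<forall>y\<in>S. R x y \<or> R y x)"

definition unif_conv :: "(nat \<Rightarrow> real \<Rightarrow> real) \<Rightarrow> (real \<Rightarrow> real) \<Rightarrow> bool" where
  "unif_conv F \<Phi> \<longleftrightarrow> (\<forall>\<epsilon>>0. \<exists>N. \<forall>n\<ge>N. \<forall>x\<in>{0<..1}. \<bar>F n x - \<Phi> x\<bar> \<le> \<epsilon>)"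

text \<open>Continuity: upper and lower contour sets closed in Qb w.r.t. the sup norm
  (sequential closedness, equivalent in a metric space).\<close>
definition pref_continuous :: "((real \<Rightarrow> real) \<Rightarrow> (real \<Rightarrow> real) \<Rightarrow> bool) \<Rightarrow> bool" where
  "pref_continuous R \<longleftrightarrow>
     (\<forall>\<Psi>\<in>Qb. \<forall>F \<Phi>. (\<forall>n. F n \<in> Qb) \<longrightarrow> \<Phi> \<in> Qb \<longrightarrow> unif_conv F \<Phi> \<longrightarrow>
        ((\<forall>n. R (F n) \<Psi>) \<longrightarrow> R \<Phi> \<Psi>) \<and> ((\<forall>n. R \<Psi> (F n)) \<longrightarrow> R \<Psi> \<Phi>))"

definition pref_monotonic :: "((real \<Rightarrow> real) \<Rightarrow> (real \<Rightarrow> real) \<Rightarrow> bool) \<Rightarrow> bool" where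
  "pref_monotonic R \<longleftrightarrow>
     (\<forall>\<Phi>\<in>Qb. \<forall>\<Psi>\<in>Qb. (\<forall>p\<in>{0<..1}. \<Phi> p \<ge> \<Psi> p) \<longrightarrow> R \<Phi> \<Psi>)"

definition dual_independence :: "((real \<Rightarrow> real) \<Rightarrow> (real \<Rightarrow> real) \<Rightarrow> bool) \<Rightarrow> bool" where
  "dual_independence R \<longleftrightarrow>
     (\<forall>\<Phi>\<in>Qb. \<forall>\<Psi>\<in>Qb. \<forall>\<Upsilon>\<in>Qb. \<forall>\<alpha>::real. 0 < \<alpha> \<and> \<alpha> < 1 \<longrightarrow>
        strict_part R \<Phi> \<Psi> \<longrightarrow>
        strict_part R (\<lambda>p. \<alpha> * \<Phi> p + (1 - \<alpha>) * \<Upsilon> p) (\<lambda>p. \<alpha> * \<Psi> p + (1 - \<alpha>) * \<Upsilon> p))"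

end

theory Submission
  imports Defs
begin

(*
  (1) Integral representation.  Every functional U on Qb that is additive,
  positively homogeneous and monotone is a Dunford--Schwartz integral: U extends
  to a linear functional on the vector space Qdiff of differences of Qb-functions;
  Qdiff contains the indicators of all sets of SigmaAlg, so mu A = U(indicator A)
  is a bounded nonnegative finitely additive measure; since every element of Qb is
  a uniform limit of SigmaAlg-simple functions (staircase approximation through
  upper level sets, which are intervals (a,1]) and U is Lipschitz in the sup norm,
  U(Phi) is the integral of Phi with respect to mu.

  (2) Certainty equivalents.  If constants are not strictly ranked, every element
  of Qb is indifferent to every other and U = 0 works.  Otherwise larger constants
  are strictly better; the contour sets along lines of constants are closed, so by
  connectedness of the reals each Phi is indifferent to a unique constant CE(Phi).
  CE represents the preference, and dual independence together with continuity
  makes CE affine under mixtures, hence additive, positively homogeneous and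
  monotone.  Part (1) applied to CE yields the measure.
*)

section \<open>The cone Qb\<close>

definition constant_fn :: "real \<Rightarrow> real \<Rightarrow> real" where
  "constant_fn c = (\<lambda>x. if x \<in> {0<..1} then c else 0)"

definition mix :: "real \<Rightarrow> (real \<Rightarrow> real) \<Rightarrow> (real \<Rightarrow> real) \<Rightarrow> real \<Rightarrow> real" where
  "mix \<alpha> \<Phi> \<Psi> = (\<lambda>p. \<alpha> * \<Phi> p + (1 - \<alpha>) * \<Psi> p)"

lemma Qb_bounded:
  assumes "\<Phi> \<in> Qb"
  shows "\<exists>B\<ge>0. \<forall>x\<in>{0<..1}. \<bar>\<Phi> x\<bar> \<le> B"
proof -
  from assms obtain B where "\<forall>y\<in>abs ` \<Phi> ` {0<..1}. y \<le> B"
    unfolding Qb_def bdd_above_def by blast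
  then have "\<forall>x\<in>{0<..1}. \<bar>\<Phi> x\<bar> \<le> B" by auto
  moreover from this have "B \<ge> 0" by (meson abs_ge_zero greaterThanAtMost_iff order_trans zero_less_one order_refl)
  ultimately show ?thesis by blast
qed

lemma Qb_mono: "\<Phi> \<in> Qb \<Longrightarrow> x \<in> {0<..1} \<Longrightarrow> y \<in> {0<..1} \<Longrightarrow> x \<le> y \<Longrightarrow> \<Phi> x \<le> \<Phi> y"
  unfolding Qb_def by (auto simp: monotone_on_def)

lemma Qb_left_continuous: "\<Phi> \<in> Qb \<Longrightarrow> p \<in> {0<..1} \<Longrightarrow> (\<Phi> \<longlongrightarrow> \<Phi> p) (at_left p)"
  unfolding Qb_def by (auto simp: continuous_within)

lemma QbI:
  assumes "\<And>x. x \<in> {0<..1} \<Longrightarrow> \<bar>\<Phi> x\<bar> \<le> B"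
    and "\<And>x y. x \<in> {0<..1} \<Longrightarrow> y \<in> {0<..1} \<Longrightarrow> x \<le> y \<Longrightarrow> \<Phi> x \<le> \<Phi> y"
    and "\<And>p. p \<in> {0<..1} \<Longrightarrow> (\<Phi> \<longlongrightarrow> \<Phi> p) (at_left p)"
    and "\<And>x. x \<notin> {0<..1} \<Longrightarrow> \<Phi> x = 0"
  shows "\<Phi> \<in> Qb"
  unfolding Qb_def
proof (intro CollectI conjI)
  show "bdd_above (abs ` \<Phi> ` {0<..1})" using assms(1) by (intro bdd_aboveI[of _ B]) auto
  show "mono_on {0<..1} \<Phi>" using assms(2) by (auto simp: monotone_on_def)
  show "\<forall>p\<in>{0<..1}. continuous (at_left p) \<Phi>" using assms(3) by (auto simp: continuous_within)
  show "\<forall>x. x \<notin> {0<..1} \<longrightarrow> \<Phi> x = 0" using assms(4) by auto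
qed

lemma eventually_at_left_in_unit:
  fixes p :: real
  assumes "p \<in> {0<..1}"
  shows "eventually (\<lambda>x. x \<in> {0<..<p}) (at_left p)"
  using eventually_at_left_real[of 0 p] assms by auto

lemma Qb_constant: "constant_fn c \<in> Qb"
proof (rule QbI[where B="\<bar>c\<bar>"])
  fix p :: real assume p: "p \<in> {0<..1}"
  have "eventually (\<lambda>x. constant_fn c x = constant_fn c p) (at_left p)"
    using eventually_at_left_in_unit[OF p]
    by eventually_elim (use p in \<open>auto simp: constant_fn_def\<close>)
  then show "(constant_fn c \<longlongrightarrow> constant_fn c p) (at_left p)" by (rule tendsto_eventually)
qed (auto simp: constant_fn_def)

lemma constant_fn_zero: "constant_fn 0 = (\<lambda>x. 0)"
  by (auto simp: constant_fn_def)

lemma Qb_zero: "(\<lambda>x. 0) \<in> Qb"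
  using Qb_constant[of 0] by (simp add: constant_fn_zero)

lemma Qb_add:
  assumes "\<Phi> \<in> Qb" "\<Psi> \<in> Qb"
  shows "(\<lambda>x. \<Phi> x + \<Psi> x) \<in> Qb"
proof -
  obtain B1 B2 where "\<forall>x\<in>{0<..1}. \<bar>\<Phi> x\<bar> \<le> B1" "\<forall>x\<in>{0<..1}. \<bar>\<Psi> x\<bar> \<le> B2"
    using Qb_bounded assms by metis
  then show ?thesis
    using assms Qb_mono[OF assms(1)] Qb_mono[OF assms(2)]
      Qb_left_continuous[OF assms(1)] Qb_left_continuous[OF assms(2)]
    by (intro QbI[where B="B1 + B2"] add_mono tendsto_add abs_triangle_ineq[THEN order_trans])
       (auto simp: Qb_def)
qed

lemma Qb_scale:
  assumes "\<Phi> \<in> Qb" "c \<ge> 0"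
  shows "(\<lambda>x. c * \<Phi> x) \<in> Qb"
proof -
  obtain B where "\<forall>x\<in>{0<..1}. \<bar>\<Phi> x\<bar> \<le> B" using Qb_bounded assms by metis
  then show ?thesis
    using assms Qb_mono[OF assms(1)] Qb_left_continuous[OF assms(1)]
    by (intro QbI[where B="c * B"] mult_left_mono tendsto_mult tendsto_const)
       (auto simp: Qb_def abs_mult intro: mult_left_mono)
qed

lemma Qb_mix: "\<Phi> \<in> Qb \<Longrightarrow> \<Psi> \<in> Qb \<Longrightarrow> 0 \<le> \<alpha> \<Longrightarrow> \<alpha> \<le> 1 \<Longrightarrow> mix \<alpha> \<Phi> \<Psi> \<in> Qb"
  unfolding mix_def by (intro Qb_add Qb_scale) auto

text \<open>Products of nonnegative elements stay in Qb; this makes the difference space an algebra.\<close>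
lemma Qb_mult_nonneg:
  assumes Q: "\<Phi> \<in> Qb" "\<Psi> \<in> Qb"
    and nonneg: "\<forall>x\<in>{0<..1}. \<Phi> x \<ge> 0" "\<forall>x\<in>{0<..1}. \<Psi> x \<ge> 0"
  shows "(\<lambda>x. \<Phi> x * \<Psi> x) \<in> Qb"
proof -
  obtain B1 B2 where b: "\<forall>x\<in>{0<..1}. \<bar>\<Phi> x\<bar> \<le> B1" "\<forall>x\<in>{0<..1}. \<bar>\<Psi> x\<bar> \<le> B2"
    using Qb_bounded Q by metis
  show ?thesis
  proof (rule QbI[where B="B1 * B2"])
    fix x :: real assume "x \<in> {0<..1}"
    then show "\<bar>\<Phi> x * \<Psi> x\<bar> \<le> B1 * B2" using b by (simp add: abs_mult mult_mono')
  next
    fix x y :: real assume "x \<in> {0<..1}" "y \<in> {0<..1}" "x \<le> y"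
    then show "\<Phi> x * \<Psi> x \<le> \<Phi> y * \<Psi> y"
      using Qb_mono[OF Q(1)] Qb_mono[OF Q(2)] nonneg by (meson mult_mono order_trans)
  next
    fix p :: real assume "p \<in> {0<..1}"
    then show "((\<lambda>x. \<Phi> x * \<Psi> x) \<longlongrightarrow> \<Phi> p * \<Psi> p) (at_left p)"
      using Qb_left_continuous Q by (intro tendsto_mult) auto
  qed (use Q in \<open>auto simp: Qb_def\<close>)
qed

lemma Qb_upper_indicator:
  assumes "a \<ge> 0"
  shows "(indicator {a<..1} :: real \<Rightarrow> real) \<in> Qb"
proof (rule QbI[where B=1])
  fix p :: real assume p: "p \<in> {0<..1}"
  have "eventually (\<lambda>x. x \<in> {0<..<p} \<inter> {a<..}) (at_left p)" if "a < p"
    using eventually_conj[OF eventually_at_left_in_unit[OF p] eventually_at_left_real[OF that]]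
    by (auto elim: eventually_mono)
  moreover have "eventually (\<lambda>x. x \<in> {0<..<p}) (at_left p)"
    by (rule eventually_at_left_in_unit[OF p])
  ultimately have "eventually (\<lambda>x. indicator {a<..1} x = (indicator {a<..1} p :: real)) (at_left p)"
    using p by (cases "a < p") (auto elim: eventually_mono simp: indicator_def)
  then show "(indicator {a<..1} \<longlongrightarrow> (indicator {a<..1} p :: real)) (at_left p)"
    by (rule tendsto_eventually)
qed (use assms in \<open>auto simp: indicator_def\<close>)

lemma mix_constants: "mix \<alpha> (constant_fn a) (constant_fn b) = constant_fn (\<alpha> * a + (1 - \<alpha>) * b)"
  by (auto simp: constant_fn_def mix_def fun_eq_iff)

lemma mix_one: "mix 1 \<Phi> \<Psi> = \<Phi>"
  by (simp add: mix_def)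

section \<open>The difference space of Qb\<close>

definition Qdiff :: "(real \<Rightarrow> real) set" where
  "Qdiff = {f. \<exists>\<Phi>\<in>Qb. \<exists>\<Psi>\<in>Qb. f = (\<lambda>x. \<Phi> x - \<Psi> x)}"

lemma QdiffI: "\<Phi> \<in> Qb \<Longrightarrow> \<Psi> \<in> Qb \<Longrightarrow> f = (\<lambda>x. \<Phi> x - \<Psi> x) \<Longrightarrow> f \<in> Qdiff"
  unfolding Qdiff_def by blast

lemma QdiffE:
  assumes "f \<in> Qdiff"
  obtains \<Phi> \<Psi> where "\<Phi> \<in> Qb" "\<Psi> \<in> Qb" "f = (\<lambda>x. \<Phi> x - \<Psi> x)"
  using assms unfolding Qdiff_def by blast

lemma Qdiff_Qb: "\<Phi> \<in> Qb \<Longrightarrow> \<Phi> \<in> Qdiff"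
  using Qb_zero by (intro QdiffI[of \<Phi> "\<lambda>x. 0"]) auto

lemma Qdiff_add:
  assumes "f \<in> Qdiff" "g \<in> Qdiff"
  shows "(\<lambda>x. f x + g x) \<in> Qdiff"
proof -
  obtain P1 N1 P2 N2 where "P1 \<in> Qb" "N1 \<in> Qb" "f = (\<lambda>x. P1 x - N1 x)"
    "P2 \<in> Qb" "N2 \<in> Qb" "g = (\<lambda>x. P2 x - N2 x)"
    using assms by (metis QdiffE)
  then show ?thesis
    by (intro QdiffI[OF Qb_add[of P1 P2] Qb_add[of N1 N2]]) (auto simp: fun_eq_iff)
qed

lemma Qdiff_scale:
  assumes "f \<in> Qdiff"
  shows "(\<lambda>x. c * f x) \<in> Qdiff"
proof -
  obtain P N where PN: "P \<in> Qb" "N \<in> Qb" "f = (\<lambda>x. P x - N x)"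
    using assms by (metis QdiffE)
  show ?thesis
  proof (cases "c \<ge> 0")
    case True
    then show ?thesis using PN
      by (intro QdiffI[OF Qb_scale[of P c] Qb_scale[of N c]]) (auto simp: right_diff_distrib)
  next
    case False
    then show ?thesis using PN
      by (intro QdiffI[OF Qb_scale[of N "-c"] Qb_scale[of P "-c"]]) (auto simp: right_diff_distrib)
  qed
qed

lemma Qdiff_diff: "f \<in> Qdiff \<Longrightarrow> g \<in> Qdiff \<Longrightarrow> (\<lambda>x. f x - g x) \<in> Qdiff"
  using Qdiff_add[of f "\<lambda>x. (-1) * g x"] Qdiff_scale[of g "-1"] by simp

text \<open>Adding a large constant to both parts makes them nonnegative on (0,1].\<close>
lemma Qdiff_nonneg_parts:
  assumes "f \<in> Qdiff"
  obtains P N where "P \<in> Qb" "N \<in> Qb" "f = (\<lambda>x. P x - N x)"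
    "\<forall>x\<in>{0<..1}. P x \<ge> 0 \<and> N x \<ge> 0"
proof -
  obtain P N where PN: "P \<in> Qb" "N \<in> Qb" "f = (\<lambda>x. P x - N x)"
    using assms by (metis QdiffE)
  obtain B1 B2 where b: "B1 \<ge> 0" "\<forall>x\<in>{0<..1}. \<bar>P x\<bar> \<le> B1"
    "B2 \<ge> 0" "\<forall>x\<in>{0<..1}. \<bar>N x\<bar> \<le> B2"
    using Qb_bounded PN by metis
  let ?K = "constant_fn (B1 + B2)"
  have "(\<lambda>x. P x + ?K x) \<in> Qb" "(\<lambda>x. N x + ?K x) \<in> Qb"
    using PN by (auto intro: Qb_add Qb_constant)
  moreover have "f = (\<lambda>x. (P x + ?K x) - (N x + ?K x))" using PN by auto
  moreover have "\<forall>x\<in>{0<..1}. P x + ?K x \<ge> 0 \<and> N x + ?K x \<ge> 0"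
    using b by (auto simp: constant_fn_def abs_le_iff)
  ultimately show ?thesis by (rule that)
qed

lemma Qdiff_mult:
  assumes "f \<in> Qdiff" "g \<in> Qdiff"
  shows "(\<lambda>x. f x * g x) \<in> Qdiff"
proof -
  obtain P1 N1 where 1: "P1 \<in> Qb" "N1 \<in> Qb" "f = (\<lambda>x. P1 x - N1 x)"
    "\<forall>x\<in>{0<..1}. P1 x \<ge> 0 \<and> N1 x \<ge> 0"
    using Qdiff_nonneg_parts[OF assms(1)] by metis
  obtain P2 N2 where 2: "P2 \<in> Qb" "N2 \<in> Qb" "g = (\<lambda>x. P2 x - N2 x)"
    "\<forall>x\<in>{0<..1}. P2 x \<ge> 0 \<and> N2 x \<ge> 0"
    using Qdiff_nonneg_parts[OF assms(2)] by metis
  have "(\<lambda>x. P1 x * P2 x + N1 x * N2 x) \<in> Qb" "(\<lambda>x. P1 x * N2 x + N1 x * P2 x) \<in> Qb"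
    using 1 2 by (auto intro!: Qb_add Qb_mult_nonneg)
  moreover have "(\<lambda>x. f x * g x) = (\<lambda>x. (P1 x * P2 x + N1 x * N2 x) - (P1 x * N2 x + N1 x * P2 x))"
    unfolding 1(3) 2(3) by (simp add: fun_eq_iff algebra_simps)
  ultimately show ?thesis by (rule QdiffI)
qed

text \<open>All sets of SigmaAlg live in (0,1], so complements inside (0,1] are differences.\<close>
lemma SigmaAlg_subset: "A \<in> SigmaAlg \<Longrightarrow> A \<subseteq> {0<..1}"
  by (induction rule: SigmaAlg.induct) auto

text \<open>Indicators of SigmaAlg-sets lie in Qdiff, since Qdiff is an algebra containing
  the indicators of the generating intervals.\<close>
lemma Qdiff_indicator: "A \<in> SigmaAlg \<Longrightarrow> (indicator A :: real \<Rightarrow> real) \<in> Qdiff"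
proof (induction rule: SigmaAlg.induct)
  case empty
  then show ?case using Qdiff_Qb[OF Qb_zero] by simp
next
  case (interval a b)
  have "(indicator {a<..b} :: real \<Rightarrow> real) = (\<lambda>x. indicator {a<..1} x - indicator {b<..1} x)"
    using interval by (auto simp: indicator_def fun_eq_iff)
  then show ?case
    using Qdiff_diff[OF Qdiff_Qb[OF Qb_upper_indicator] Qdiff_Qb[OF Qb_upper_indicator], of a b]
      interval by simp
next
  case (compl A)
  have "(indicator ({0<..1} - A) :: real \<Rightarrow> real) = (\<lambda>x. constant_fn 1 x - indicator A x)"
    using SigmaAlg_subset[OF compl(1)] by (auto simp: indicator_def fun_eq_iff constant_fn_def)
  then show ?case using Qdiff_diff[OF Qdiff_Qb[OF Qb_constant] compl(2)] by simp
next
  case (union A B)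
  have "(indicator (A \<union> B) :: real \<Rightarrow> real)
      = (\<lambda>x. (indicator A x + indicator B x) - indicator A x * indicator B x)"
    by (auto simp: indicator_def fun_eq_iff)
  then show ?case using union(3,4) by (auto intro!: Qdiff_diff Qdiff_add Qdiff_mult)
next
  case (inter A B)
  have "(indicator (A \<inter> B) :: real \<Rightarrow> real) = (\<lambda>x. indicator A x * indicator B x)"
    by (auto simp: indicator_def fun_eq_iff)
  then show ?case using inter(3,4) by (auto intro!: Qdiff_mult)
qed

lemma simple_eval_Cons: "simple_eval ((a, A) # xs) x = a * indicator A x + simple_eval xs x"
  by (simp add: simple_eval_def)

lemma simple_int_Cons: "simple_int \<mu> ((a, A) # xs) = a * \<mu> A + simple_int \<mu> xs"
  by (simp add: simple_int_def)

lemma Qdiff_simple: "set (map snd xs) \<subseteq> SigmaAlg \<Longrightarrow> simple_eval xs \<in> Qdiff"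
proof (induction xs)
  case Nil
  then show ?case using Qdiff_Qb[OF Qb_zero] by (simp add: simple_eval_def)
next
  case (Cons p xs)
  then show ?case
    by (cases p) (auto simp: simple_eval_Cons intro!: Qdiff_add Qdiff_scale Qdiff_indicator)
qed

section \<open>Approximation of Qb by simple functions\<close>

lemma Qb_upper_level_open_left:
  assumes "\<Phi> \<in> Qb" "x \<in> {0<..1}" "t < \<Phi> x"
  shows "\<exists>y\<in>{0<..<x}. t < \<Phi> y"
proof -
  have "eventually (\<lambda>y. t < \<Phi> y \<and> y \<in> {0<..<x}) (at_left x)"
    using order_tendstoD(1)[OF Qb_left_continuous[OF assms(1,2)] assms(3)]
      eventually_at_left_in_unit[OF assms(2)]
    by (rule eventually_conj)
  then show ?thesis
    using eventually_happens' trivial_limit_at_left_real by blast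
qed

lemma Qb_upper_level_set:
  assumes Q: "\<Phi> \<in> Qb"
  shows "\<exists>a\<ge>0. {p\<in>{0<..1}. t < \<Phi> p} = {a<..1}"
proof (cases "{p\<in>{0<..1}. t < \<Phi> p} = {}")
  case True
  then show ?thesis by (intro exI[of _ 1]) auto
next
  case False
  define S where "S = {p\<in>{0<..1}. t < \<Phi> p}"
  have ne: "S \<noteq> {}" and bdd: "bdd_below S"
    using False unfolding S_def by (auto intro: bdd_belowI[of _ 0])
  have "Inf S \<ge> 0" using ne by (intro cInf_greatest) (auto simp: S_def)
  moreover have "S = {Inf S<..1}"
  proof (intro set_eqI iffI)
    fix x assume x: "x \<in> S"
    then obtain y where "y \<in> {0<..<x}" "t < \<Phi> y"
      using Qb_upper_level_open_left[OF Q] unfolding S_def by blast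
    moreover from this have "Inf S \<le> y" using x bdd by (auto simp: S_def intro: cInf_lower)
    ultimately show "x \<in> {Inf S<..1}" using x by (auto simp: S_def)
  next
    fix x assume x: "x \<in> {Inf S<..1}"
    then obtain q where q: "q \<in> S" "q < x" using cInf_lessD[OF ne] by auto
    then have "\<Phi> q \<le> \<Phi> x" using Qb_mono[OF Q] x by (auto simp: S_def)
    then show "x \<in> S" using q x \<open>Inf S \<ge> 0\<close> by (auto simp: S_def)
  qed
  ultimately show ?thesis unfolding S_def by blast
qed

lemma SigmaAlg_upper_interval:
  assumes "a \<ge> 0"
  shows "{a<..1} \<in> SigmaAlg"
proof -
  consider "a = 0" | "0 < a \<and> a < 1" | "a \<ge> 1" using assms by linarith
  then show ?thesis
  proof cases
    case 1
    then show ?thesis using SigmaAlg.compl[OF SigmaAlg.empty] by simp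
  next
    case 2
    then show ?thesis by (auto intro: SigmaAlg.interval)
  next
    case 3
    then show ?thesis using SigmaAlg.empty by simp
  qed
qed

lemma Qb_upper_level_SigmaAlg: "\<Phi> \<in> Qb \<Longrightarrow> {p\<in>{0<..1}. t < \<Phi> p} \<in> SigmaAlg"
  using Qb_upper_level_set SigmaAlg_upper_interval by metis

text \<open>Counting the grid points 1..N strictly below y recovers y up to an error of 1;
  this is the error estimate for a staircase approximation.\<close>
lemma staircase_count:
  fixes y :: real
  shows "0 \<le> y \<Longrightarrow> y \<le> real N \<Longrightarrow> \<bar>y - (\<Sum>k=1..N. if real k < y then 1 else 0)\<bar> \<le> 1"
proof (induction N arbitrary: y)
  case 0
  then show ?case by simp
next
  case (Suc N)
  show ?case
  proof (cases "y \<le> real N")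
    case True
    then show ?thesis using Suc by simp
  next
    case False
    have "(\<Sum>k=1..N. if real k < y then 1 else (0::real)) = (\<Sum>k=1..N. 1)"
      by (rule sum.cong) (use False in auto)
    then show ?thesis using False Suc.prems by simp
  qed
qed

text \<open>Every element of Qb is a uniform limit of SigmaAlg-simple functions: the staircase
  m + delta * (number of levels m + k delta below Phi) is delta-close to Phi.\<close>
lemma Qb_simple_approximation:
  assumes Q: "\<Phi> \<in> Qb" and \<delta>: "\<delta> > 0"
  shows "\<exists>xs. set (map snd xs) \<subseteq> SigmaAlg \<and> (\<forall>x\<in>{0<..1}. \<bar>\<Phi> x - simple_eval xs x\<bar> \<le> \<delta>)"
proof -
  obtain B where B: "\<forall>x\<in>{0<..1}. \<bar>\<Phi> x\<bar> \<le> B" using Qb_bounded[OF Q] by blast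
  define N where "N = nat \<lceil>2 * B / \<delta>\<rceil>"
  define S where "S = (\<lambda>k::nat. {p\<in>{0<..1}. - B + real k * \<delta> < \<Phi> p})"
  define xs where "xs = (- B, {0<..1::real}) # map (\<lambda>k. (\<delta>, S k)) [1..<N+1]"
  have "set (map snd xs) \<subseteq> SigmaAlg"
    unfolding xs_def S_def using Qb_upper_level_SigmaAlg[OF Q] SigmaAlg.compl[OF SigmaAlg.empty]
    by auto
  moreover have "\<bar>\<Phi> x - simple_eval xs x\<bar> \<le> \<delta>" if x: "x \<in> {0<..1}" for x
  proof -
    define y where "y = (\<Phi> x + B) / \<delta>"
    have "\<bar>\<Phi> x\<bar> \<le> B" using B x by blast
    then have "0 \<le> y" "y \<le> 2 * B / \<delta>"
      using \<delta> unfolding y_def by (auto intro!: divide_right_mono simp: abs_le_iff)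
    then have y: "0 \<le> y" "y \<le> real N" unfolding N_def by linarith+
    have level: "indicator (S k) x = (if real k < y then 1 else (0::real))" for k
      using x \<delta> by (simp add: S_def indicator_def y_def field_simps)
    have "simple_eval xs x = - B + (\<Sum>k\<leftarrow>[1..<N+1]. \<delta> * indicator (S k) x)"
      unfolding xs_def simple_eval_Cons using x by (simp add: simple_eval_def comp_def)
    also have "(\<Sum>k\<leftarrow>[1..<N+1]. \<delta> * indicator (S k) x) = (\<Sum>k=1..N. \<delta> * indicator (S k) x)"
      unfolding sum_set_upt_conv_sum_list_nat[symmetric] set_upt
      by (rule sum.cong) auto
    also have "\<dots> = \<delta> * (\<Sum>k=1..N. if real k < y then 1 else 0)"
      by (simp add: level sum_distrib_left)
    finally have "\<Phi> x - simple_eval xs x = \<delta> * y - \<delta> * (\<Sum>k=1..N. if real k < y then 1 else 0)"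
      using \<delta> by (simp add: y_def)
    then show ?thesis
      using staircase_count[OF y] \<delta> by (simp add: abs_mult flip: right_diff_distrib)
  qed
  ultimately show ?thesis by blast
qed

lemma has_fa_integral_unique:
  assumes Q: "\<Phi> \<in> Qb" and "has_fa_integral \<mu> \<Phi> c1" "has_fa_integral \<mu> \<Phi> c2"
  shows "c1 = c2"
proof (rule ccontr)
  assume ne: "c1 \<noteq> c2"
  define \<epsilon> where "\<epsilon> = \<bar>c1 - c2\<bar> / 3"
  have \<epsilon>: "\<epsilon> > 0" using ne \<epsilon>_def by simp
  obtain d1 where d1: "d1 > 0"
    "\<forall>xs. set (map snd xs) \<subseteq> SigmaAlg \<and> (\<forall>x\<in>{0<..1}. \<bar>\<Phi> x - simple_eval xs x\<bar> \<le> d1)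
        \<longrightarrow> \<bar>c1 - simple_int \<mu> xs\<bar> \<le> \<epsilon>"
    using assms(2) \<epsilon> unfolding has_fa_integral_def by blast
  obtain d2 where d2: "d2 > 0"
    "\<forall>xs. set (map snd xs) \<subseteq> SigmaAlg \<and> (\<forall>x\<in>{0<..1}. \<bar>\<Phi> x - simple_eval xs x\<bar> \<le> d2)
        \<longrightarrow> \<bar>c2 - simple_int \<mu> xs\<bar> \<le> \<epsilon>"
    using assms(3) \<epsilon> unfolding has_fa_integral_def by blast
  obtain xs where "set (map snd xs) \<subseteq> SigmaAlg"
    "\<forall>x\<in>{0<..1}. \<bar>\<Phi> x - simple_eval xs x\<bar> \<le> min d1 d2"
    using Qb_simple_approximation[OF Q, of "min d1 d2"] d1 d2 by auto
  then have "\<bar>c1 - simple_int \<mu> xs\<bar> \<le> \<epsilon>" "\<bar>c2 - simple_int \<mu> xs\<bar> \<le> \<epsilon>"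
    using d1(2) d2(2) by force+
  then have "\<bar>c1 - c2\<bar> \<le> 2 * \<epsilon>" by linarith
  then show False using \<epsilon>_def ne by simp
qed

section \<open>Monotone additive functionals on Qb are integrals\<close>

locale monotone_additive_functional =
  fixes U :: "(real \<Rightarrow> real) \<Rightarrow> real"
  assumes additive: "\<Phi> \<in> Qb \<Longrightarrow> \<Psi> \<in> Qb \<Longrightarrow> U (\<lambda>x. \<Phi> x + \<Psi> x) = U \<Phi> + U \<Psi>"
    and homogeneous: "\<Phi> \<in> Qb \<Longrightarrow> c \<ge> 0 \<Longrightarrow> U (\<lambda>x. c * \<Phi> x) = c * U \<Phi>"
    and monotone: "\<Phi> \<in> Qb \<Longrightarrow> \<Psi> \<in> Qb \<Longrightarrow> \<forall>x\<in>{0<..1}. \<Psi> x \<le> \<Phi> x \<Longrightarrow> U \<Psi> \<le> U \<Phi>"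
begin

text \<open>The linear extension of U to Qdiff, well defined by additivity.\<close>
definition Uext :: "(real \<Rightarrow> real) \<Rightarrow> real" where
  "Uext f = (SOME c. \<exists>\<Phi>\<in>Qb. \<exists>\<Psi>\<in>Qb. f = (\<lambda>x. \<Phi> x - \<Psi> x) \<and> c = U \<Phi> - U \<Psi>)"

lemma Uext_eq:
  assumes "\<Phi> \<in> Qb" "\<Psi> \<in> Qb" "f = (\<lambda>x. \<Phi> x - \<Psi> x)"
  shows "Uext f = U \<Phi> - U \<Psi>"
proof -
  have "\<exists>c. \<exists>\<Phi>\<in>Qb. \<exists>\<Psi>\<in>Qb. f = (\<lambda>x. \<Phi> x - \<Psi> x) \<and> c = U \<Phi> - U \<Psi>"
    using assms by blast
  from someI_ex[OF this] obtain P N where PN: "P \<in> Qb" "N \<in> Qb"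
    "f = (\<lambda>x. P x - N x)" "Uext f = U P - U N"
    unfolding Uext_def[symmetric] by blast
  have "(\<lambda>x. \<Phi> x + N x) = (\<lambda>x. P x + \<Psi> x)"
    using fun_cong[OF trans[OF assms(3)[symmetric] PN(3)]] by (auto simp: fun_eq_iff algebra_simps)
  then have "U \<Phi> + U N = U P + U \<Psi>" using additive assms PN by metis
  then show ?thesis using PN by simp
qed

lemma U_zero: "U (\<lambda>x. 0) = 0"
  using homogeneous[OF Qb_zero, of 0] by simp

lemma Uext_Qb: "\<Phi> \<in> Qb \<Longrightarrow> Uext \<Phi> = U \<Phi>"
  using Uext_eq[of \<Phi> "\<lambda>x. 0" \<Phi>] Qb_zero U_zero by simp

lemma Uext_add:
  assumes "f \<in> Qdiff" "g \<in> Qdiff"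
  shows "Uext (\<lambda>x. f x + g x) = Uext f + Uext g"
proof -
  obtain P1 N1 P2 N2 where PN: "P1 \<in> Qb" "N1 \<in> Qb" "f = (\<lambda>x. P1 x - N1 x)"
    "P2 \<in> Qb" "N2 \<in> Qb" "g = (\<lambda>x. P2 x - N2 x)"
    using assms by (metis QdiffE)
  have sum: "(\<lambda>x. f x + g x) = (\<lambda>x. (P1 x + P2 x) - (N1 x + N2 x))"
    unfolding PN(3,6) by (simp add: fun_eq_iff)
  show ?thesis
    unfolding Uext_eq[OF Qb_add[OF PN(1,4)] Qb_add[OF PN(2,5)] sum]
      Uext_eq[OF PN(1-3)] Uext_eq[OF PN(4-6)] additive[OF PN(1,4)] additive[OF PN(2,5)]
    by simp
qed

lemma Uext_scale:
  assumes "f \<in> Qdiff"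
  shows "Uext (\<lambda>x. c * f x) = c * Uext f"
proof -
  obtain P N where PN: "P \<in> Qb" "N \<in> Qb" "f = (\<lambda>x. P x - N x)"
    using assms by (metis QdiffE)
  show ?thesis
  proof (cases "c \<ge> 0")
    case True
    have scaled: "(\<lambda>x. c * f x) = (\<lambda>x. c * P x - c * N x)"
      unfolding PN(3) by (simp add: fun_eq_iff right_diff_distrib)
    show ?thesis
      unfolding Uext_eq[OF Qb_scale[OF PN(1) True] Qb_scale[OF PN(2) True] scaled] Uext_eq[OF PN]
        homogeneous[OF PN(1) True] homogeneous[OF PN(2) True]
      by (simp add: right_diff_distrib)
  next
    case False
    then have c: "-c \<ge> 0" by simp
    have scaled: "(\<lambda>x. c * f x) = (\<lambda>x. (-c) * N x - (-c) * P x)"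
      unfolding PN(3) by (simp add: fun_eq_iff right_diff_distrib)
    show ?thesis
      unfolding Uext_eq[OF Qb_scale[OF PN(2) c] Qb_scale[OF PN(1) c] scaled] Uext_eq[OF PN]
        homogeneous[OF PN(1) c] homogeneous[OF PN(2) c]
      by (simp add: right_diff_distrib)
  qed
qed

lemma Uext_diff: "f \<in> Qdiff \<Longrightarrow> g \<in> Qdiff \<Longrightarrow> Uext (\<lambda>x. f x - g x) = Uext f - Uext g"
  using Uext_add[of f "\<lambda>x. (-1) * g x"] Uext_scale[of g "-1"] Qdiff_scale[of g "-1"] by simp

lemma Uext_nonneg:
  assumes "f \<in> Qdiff" "\<forall>x\<in>{0<..1}. f x \<ge> 0"
  shows "Uext f \<ge> 0"
proof -
  obtain P N where PN: "P \<in> Qb" "N \<in> Qb" "f = (\<lambda>x. P x - N x)"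
    using assms by (metis QdiffE)
  then have "U N \<le> U P" using assms(2) by (intro monotone) auto
  then show ?thesis using Uext_eq[OF PN] by simp
qed

lemma Uext_bound:
  assumes f: "f \<in> Qdiff" and b: "\<forall>x\<in>{0<..1}. \<bar>f x\<bar> \<le> d"
  shows "\<bar>Uext f\<bar> \<le> d * U (constant_fn 1)"
proof -
  have "d \<ge> 0" using b by (meson abs_ge_zero greaterThanAtMost_iff order_trans zero_less_one order_refl)
  moreover have "(\<lambda>x. d * constant_fn 1 x) = constant_fn d" by (auto simp: constant_fn_def)
  ultimately have "Uext (constant_fn d) = d * U (constant_fn 1)"
    using homogeneous[OF Qb_constant, of d 1] Uext_Qb[OF Qb_constant] by simp
  moreover have "Uext (\<lambda>x. constant_fn d x - f x) \<ge> 0"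
    by (rule Uext_nonneg[OF Qdiff_diff[OF Qdiff_Qb[OF Qb_constant] f]])
      (use b in \<open>auto simp: constant_fn_def abs_le_iff\<close>)
  moreover have "Uext (\<lambda>x. constant_fn d x + f x) \<ge> 0"
    by (rule Uext_nonneg[OF Qdiff_add[OF Qdiff_Qb[OF Qb_constant] f]])
      (use b in \<open>auto simp: constant_fn_def abs_le_iff\<close>)
  ultimately show ?thesis
    using Uext_diff Uext_add f Qdiff_Qb[OF Qb_constant] by (simp add: abs_le_iff)
qed

definition induced_measure :: "real set \<Rightarrow> real" where
  "induced_measure A = Uext (indicator A)"

lemma fa_measure_induced: "fa_measure induced_measure"
  unfolding fa_measure_def
proof (intro conjI ballI impI exI)
  have "(indicator {} :: real \<Rightarrow> real) = (\<lambda>x. 0)" by (simp add: fun_eq_iff)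
  then show "induced_measure {} = 0"
    using Uext_Qb[OF Qb_zero] U_zero by (simp add: induced_measure_def)
  fix A assume A: "A \<in> SigmaAlg"
  show "0 \<le> induced_measure A"
    unfolding induced_measure_def using Qdiff_indicator[OF A] by (intro Uext_nonneg) auto
  show "\<bar>induced_measure A\<bar> \<le> 1 * U (constant_fn 1)"
    unfolding induced_measure_def by (rule Uext_bound[OF Qdiff_indicator[OF A]]) auto
  fix B assume B: "B \<in> SigmaAlg" and disjoint: "A \<inter> B = {}"
  have "(indicator (A \<union> B) :: real \<Rightarrow> real) = (\<lambda>x. indicator A x + indicator B x)"
    using disjoint by (auto simp: indicator_def fun_eq_iff)
  then show "induced_measure (A \<union> B) = induced_measure A + induced_measure B"
    unfolding induced_measure_def using Uext_add[OF Qdiff_indicator[OF A] Qdiff_indicator[OF B]]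
    by simp
qed

lemma Uext_simple:
  "set (map snd xs) \<subseteq> SigmaAlg \<Longrightarrow> Uext (simple_eval xs) = simple_int induced_measure xs"
proof (induction xs)
  case Nil
  then show ?case
    using Uext_Qb[OF Qb_zero] U_zero by (simp add: simple_eval_def simple_int_def)
next
  case (Cons p xs)
  obtain a A where p: "p = (a, A)" by (cases p)
  have A: "A \<in> SigmaAlg" and xs: "set (map snd xs) \<subseteq> SigmaAlg" using Cons.prems p by auto
  have "simple_eval (p # xs) = (\<lambda>x. a * indicator A x + simple_eval xs x)"
    unfolding p by (simp add: fun_eq_iff simple_eval_Cons)
  then show ?case
    using Uext_add[OF Qdiff_scale[OF Qdiff_indicator[OF A]] Qdiff_simple[OF xs]]
      Uext_scale[OF Qdiff_indicator[OF A]] Cons.IH[OF xs]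
    by (simp add: p simple_int_Cons induced_measure_def)
qed

text \<open>U is the integral: a delta-close simple function has a (delta * U 1)-close integral.\<close>
lemma has_fa_integral_U:
  assumes Q: "\<Phi> \<in> Qb"
  shows "has_fa_integral induced_measure \<Phi> (U \<Phi>)"
  unfolding has_fa_integral_def
proof (intro allI impI)
  fix \<epsilon> :: real assume \<epsilon>: "\<epsilon> > 0"
  define \<delta> where "\<delta> = \<epsilon> / (U (constant_fn 1) + 1)"
  have "U (constant_fn 0) \<le> U (constant_fn 1)"
    by (rule monotone[OF Qb_constant Qb_constant]) (auto simp: constant_fn_def)
  then have U1: "U (constant_fn 1) \<ge> 0" using U_zero by (simp add: constant_fn_zero)
  have \<delta>: "\<delta> > 0" "\<delta> * U (constant_fn 1) \<le> \<epsilon>"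
    using \<epsilon> U1 by (auto simp: \<delta>_def field_simps)
  show "\<exists>\<delta>>0. \<forall>xs. set (map snd xs) \<subseteq> SigmaAlg \<and> (\<forall>x\<in>{0<..1}. \<bar>\<Phi> x - simple_eval xs x\<bar> \<le> \<delta>)
      \<longrightarrow> \<bar>U \<Phi> - simple_int induced_measure xs\<bar> \<le> \<epsilon>"
  proof (intro exI[of _ \<delta>] conjI allI impI \<delta>(1))
    fix xs
    assume xs: "set (map snd xs) \<subseteq> SigmaAlg \<and> (\<forall>x\<in>{0<..1}. \<bar>\<Phi> x - simple_eval xs x\<bar> \<le> \<delta>)"
    then have "\<bar>Uext (\<lambda>x. \<Phi> x - simple_eval xs x)\<bar> \<le> \<delta> * U (constant_fn 1)"
      by (intro Uext_bound Qdiff_diff Qdiff_Qb Q Qdiff_simple) auto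
    moreover have "Uext (\<lambda>x. \<Phi> x - simple_eval xs x) = U \<Phi> - simple_int induced_measure xs"
      using xs Uext_diff[OF Qdiff_Qb[OF Q] Qdiff_simple] Uext_Qb[OF Q] Uext_simple by simp
    ultimately show "\<bar>U \<Phi> - simple_int induced_measure xs\<bar> \<le> \<epsilon>" using \<delta>(2) by simp
  qed
qed

theorem integral_representation: "\<exists>\<mu>. fa_measure \<mu> \<and> (\<forall>\<Phi>\<in>Qb. fa_integral \<mu> \<Phi> = U \<Phi>)"
  using fa_measure_induced has_fa_integral_U has_fa_integral_unique
  unfolding fa_integral_def by blast

end

text \<open>Functions differing from a limit by vanishing constants converge uniformly; this is
  how continuity of the preference is used along lines of constants.\<close>
lemma unif_conv_shift:
  assumes "d \<longlonglongrightarrow> 0" and "\<And>n x. x \<in> {0<..1} \<Longrightarrow> F n x = G x + d n"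
  shows "unif_conv F G"
  unfolding unif_conv_def
proof (intro allI impI)
  fix \<epsilon> :: real assume "\<epsilon> > 0"
  then obtain N where "\<forall>n\<ge>N. \<bar>d n\<bar> < \<epsilon>" using LIMSEQ_D[OF assms(1)] by auto
  then show "\<exists>N. \<forall>n\<ge>N. \<forall>x\<in>{0<..1}. \<bar>F n x - G x\<bar> \<le> \<epsilon>"
    using assms(2) by (intro exI[of _ N]) force
qed

section \<open>Preferences satisfying the axioms\<close>

locale preference =
  fixes R :: "(real \<Rightarrow> real) \<Rightarrow> (real \<Rightarrow> real) \<Rightarrow> bool"
  assumes total_preorder: "total_preorder_on Qb R"
    and continuous: "pref_continuous R"
    and monotonic: "pref_monotonic R"
    and independent: "dual_independence R"
begin

abbreviation strict :: "(real \<Rightarrow> real) \<Rightarrow> (real \<Rightarrow> real) \<Rightarrow> bool" where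
  "strict \<equiv> strict_part R"

lemma R_refl: "\<Phi> \<in> Qb \<Longrightarrow> R \<Phi> \<Phi>"
  using total_preorder unfolding total_preorder_on_def by blast

lemma R_trans: "\<Phi> \<in> Qb \<Longrightarrow> \<Psi> \<in> Qb \<Longrightarrow> \<Upsilon> \<in> Qb \<Longrightarrow> R \<Phi> \<Psi> \<Longrightarrow> R \<Psi> \<Upsilon> \<Longrightarrow> R \<Phi> \<Upsilon>"
  using total_preorder unfolding total_preorder_on_def by blast

lemma R_total: "\<Phi> \<in> Qb \<Longrightarrow> \<Psi> \<in> Qb \<Longrightarrow> R \<Phi> \<Psi> \<or> R \<Psi> \<Phi>"
  using total_preorder unfolding total_preorder_on_def by blast

lemma R_mono: "\<Phi> \<in> Qb \<Longrightarrow> \<Psi> \<in> Qb \<Longrightarrow> (\<And>p. p \<in> {0<..1} \<Longrightarrow> \<Psi> p \<le> \<Phi> p) \<Longrightarrow> R \<Phi> \<Psi>"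
  using monotonic unfolding pref_monotonic_def by blast

lemma R_limit_upper:
  "\<Psi> \<in> Qb \<Longrightarrow> (\<And>n. F n \<in> Qb) \<Longrightarrow> \<Phi> \<in> Qb \<Longrightarrow> unif_conv F \<Phi> \<Longrightarrow> (\<And>n. R (F n) \<Psi>) \<Longrightarrow> R \<Phi> \<Psi>"
  using continuous unfolding pref_continuous_def by blast

lemma R_limit_lower:
  "\<Psi> \<in> Qb \<Longrightarrow> (\<And>n. F n \<in> Qb) \<Longrightarrow> \<Phi> \<in> Qb \<Longrightarrow> unif_conv F \<Phi> \<Longrightarrow> (\<And>n. R \<Psi> (F n)) \<Longrightarrow> R \<Psi> \<Phi>"
  using continuous unfolding pref_continuous_def by blast

lemma strict_mix:
  "\<Phi> \<in> Qb \<Longrightarrow> \<Psi> \<in> Qb \<Longrightarrow> \<Upsilon> \<in> Qb \<Longrightarrow> 0 < \<alpha> \<Longrightarrow> \<alpha> < 1 \<Longrightarrow> strict \<Phi> \<Psi> \<Longrightarrow>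
   strict (mix \<alpha> \<Phi> \<Upsilon>) (mix \<alpha> \<Psi> \<Upsilon>)"
  using independent unfolding dual_independence_def mix_def by blast

lemma R_strict_trans: "\<Phi> \<in> Qb \<Longrightarrow> \<Psi> \<in> Qb \<Longrightarrow> \<Upsilon> \<in> Qb \<Longrightarrow> R \<Phi> \<Psi> \<Longrightarrow> strict \<Psi> \<Upsilon> \<Longrightarrow> strict \<Phi> \<Upsilon>"
  unfolding strict_part_def using R_trans by blast

lemma strict_R_trans: "\<Phi> \<in> Qb \<Longrightarrow> \<Psi> \<in> Qb \<Longrightarrow> \<Upsilon> \<in> Qb \<Longrightarrow> strict \<Phi> \<Psi> \<Longrightarrow> R \<Psi> \<Upsilon> \<Longrightarrow> strict \<Phi> \<Upsilon>"
  unfolding strict_part_def using R_trans by blast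

lemma R_constants: "y \<le> x \<Longrightarrow> R (constant_fn x) (constant_fn y)"
  by (rule R_mono[OF Qb_constant Qb_constant]) (auto simp: constant_fn_def)

lemma R_bounds:
  assumes "\<Phi> \<in> Qb" "\<forall>x\<in>{0<..1}. \<bar>\<Phi> x\<bar> \<le> B"
  shows "R (constant_fn B) \<Phi>" "R \<Phi> (constant_fn (- B))"
proof -
  have bound: "- B \<le> \<Phi> p \<and> \<Phi> p \<le> B" if "p \<in> {0<..1}" for p
    using bspec[OF assms(2) that] by linarith
  show "R (constant_fn B) \<Phi>"
    by (rule R_mono[OF Qb_constant assms(1)]) (use bound in \<open>simp add: constant_fn_def\<close>)
  show "R \<Phi> (constant_fn (- B))"
    by (rule R_mono[OF assms(1) Qb_constant]) (use bound in \<open>simp add: constant_fn_def\<close>)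
qed

lemma line_contours_closed:
  assumes Q: "\<Psi> \<in> Qb" "\<Upsilon> \<in> Qb" and \<alpha>: "0 \<le> \<alpha>" "\<alpha> \<le> 1"
  shows "closed {c. R (mix \<alpha> (constant_fn c) \<Upsilon>) \<Psi>}" "closed {c. R \<Psi> (mix \<alpha> (constant_fn c) \<Upsilon>)}"
proof -
  have line: "mix \<alpha> (constant_fn c) \<Upsilon> \<in> Qb" for c
    using Qb_mix[OF Qb_constant Q(2) \<alpha>] .
  have conv: "unif_conv (\<lambda>n. mix \<alpha> (constant_fn (c n)) \<Upsilon>) (mix \<alpha> (constant_fn l) \<Upsilon>)"
    if "c \<longlonglongrightarrow> l" for c l
  proof (rule unif_conv_shift)
    show "(\<lambda>n. \<alpha> * (c n - l)) \<longlonglongrightarrow> 0"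
      using that by (intro tendsto_mult_right_zero LIM_zero)
  qed (auto simp: mix_def constant_fn_def algebra_simps)
  have "R (mix \<alpha> (constant_fn l) \<Upsilon>) \<Psi>"
    if "\<forall>n. R (mix \<alpha> (constant_fn (c n)) \<Upsilon>) \<Psi>" "c \<longlonglongrightarrow> l" for c l
    using R_limit_upper[OF Q(1) line line conv[OF that(2)]] that(1) by blast
  moreover have "R \<Psi> (mix \<alpha> (constant_fn l) \<Upsilon>)"
    if "\<forall>n. R \<Psi> (mix \<alpha> (constant_fn (c n)) \<Upsilon>)" "c \<longlonglongrightarrow> l" for c l
    using R_limit_lower[OF Q(1) line line conv[OF that(2)]] that(1) by blast
  ultimately show "closed {c. R (mix \<alpha> (constant_fn c) \<Upsilon>) \<Psi>}"
    "closed {c. R \<Psi> (mix \<alpha> (constant_fn c) \<Upsilon>)}"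
    unfolding closed_sequential_limits by blast+
qed

text \<open>Every element of Qb is indifferent to some constant: the two closed contour sets
  cover the connected real line and are nonempty, hence they intersect.\<close>
lemma certainty_equivalent_exists:
  assumes Q: "\<Phi> \<in> Qb"
  shows "\<exists>c. R \<Phi> (constant_fn c) \<and> R (constant_fn c) \<Phi>"
proof -
  obtain B where B: "\<forall>x\<in>{0<..1}. \<bar>\<Phi> x\<bar> \<le> B" using Qb_bounded[OF Q] by blast
  let ?above = "{c. R (constant_fn c) \<Phi>}" and ?below = "{c. R \<Phi> (constant_fn c)}"
  have "closed ?above" "closed ?below"
    using line_contours_closed[OF Q Q, of 1] by (simp_all add: mix_one)
  moreover have "UNIV \<subseteq> ?above \<union> ?below" using R_total[OF Q Qb_constant] by blast
  moreover have "?above \<noteq> {}" "?below \<noteq> {}" using R_bounds[OF Q B] by blast+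
  ultimately have "?above \<inter> ?below \<noteq> {}"
    using connected_UNIV[where 'a=real, unfolded connected_closed] by blast
  then show ?thesis by blast
qed

text \<open>If some constant is strictly better than another, then every larger constant is
  strictly better than every smaller one: mixing a and b with a third constant produces
  any sufficiently small positive gap.\<close>
lemma strict_constants:
  assumes ab: "strict (constant_fn a) (constant_fn b)" and "y < x"
  shows "strict (constant_fn x) (constant_fn y)"
proof -
  have "b < a" using ab R_constants[of a b] unfolding strict_part_def by force
  define d where "d = min (x - y) ((a - b) / 2)"
  have d: "0 < d" "d < a - b" "d \<le> x - y" using \<open>b < a\<close> \<open>y < x\<close> by (auto simp: d_def min_def)
  define \<alpha> where "\<alpha> = d / (a - b)"
  have \<alpha>: "0 < \<alpha>" "\<alpha> < 1" "\<alpha> * (a - b) = d" using d by (auto simp: \<alpha>_def)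
  define z where "z = (y - \<alpha> * b) / (1 - \<alpha>)"
  have z: "\<alpha> * b + (1 - \<alpha>) * z = y" using \<alpha> by (simp add: z_def)
  then have "\<alpha> * a + (1 - \<alpha>) * z = y + d" using \<alpha>(3) by (simp add: algebra_simps)
  then have "strict (constant_fn (y + d)) (constant_fn y)"
    using strict_mix[OF Qb_constant Qb_constant Qb_constant \<alpha>(1,2) ab, of z] z
    by (simp add: mix_constants)
  moreover have "R (constant_fn x) (constant_fn (y + d))" using d by (intro R_constants) simp
  ultimately show ?thesis using R_strict_trans[OF Qb_constant Qb_constant Qb_constant] by blast
qed

text \<open>Otherwise all elements of Qb are indifferent, since each lies between two constants.\<close>
lemma degenerate_indifference:
  assumes "\<not> strict (constant_fn 1) (constant_fn 0)" and Q: "\<Phi> \<in> Qb" "\<Psi> \<in> Qb"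
  shows "\<not> strict \<Phi> \<Psi>"
proof
  assume "strict \<Phi> \<Psi>"
  obtain B1 B2 where "\<forall>x\<in>{0<..1}. \<bar>\<Phi> x\<bar> \<le> B1" "\<forall>x\<in>{0<..1}. \<bar>\<Psi> x\<bar> \<le> B2"
    using Qb_bounded Q by metis
  then have "R (constant_fn B1) \<Phi>" "R \<Psi> (constant_fn (- B2))" using R_bounds Q by blast+
  then have "strict (constant_fn B1) (constant_fn (- B2))"
    using R_strict_trans[OF Qb_constant Q] strict_R_trans[OF _ Q(2) Qb_constant] Q \<open>strict \<Phi> \<Psi>\<close>
      Qb_constant by blast
  then show False using strict_constants[of B1 "- B2" 0 1] assms(1) by simp
qed

end

section \<open>The certainty equivalent of a nondegenerate preference\<close>

locale nondegenerate_preference = preference +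
  assumes nondegenerate: "strict_part R (constant_fn 1) (constant_fn 0)"
begin

lemma strict_constant: "y < x \<Longrightarrow> strict (constant_fn x) (constant_fn y)"
  by (rule strict_constants[OF nondegenerate])

lemma R_constant_iff: "R (constant_fn x) (constant_fn y) \<longleftrightarrow> y \<le> x"
  using R_constants strict_constant unfolding strict_part_def by (meson not_le)

definition CE :: "(real \<Rightarrow> real) \<Rightarrow> real" where
  "CE \<Phi> = (SOME c. R \<Phi> (constant_fn c) \<and> R (constant_fn c) \<Phi>)"

lemma CE_indifferent: "\<Phi> \<in> Qb \<Longrightarrow> R \<Phi> (constant_fn (CE \<Phi>)) \<and> R (constant_fn (CE \<Phi>)) \<Phi>"
  unfolding CE_def using someI_ex[OF certainty_equivalent_exists] by blast

lemma CE_unique: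
  assumes Q: "\<Phi> \<in> Qb" and c: "R \<Phi> (constant_fn c)" "R (constant_fn c) \<Phi>"
  shows "CE \<Phi> = c"
proof -
  have "R (constant_fn (CE \<Phi>)) (constant_fn c)" "R (constant_fn c) (constant_fn (CE \<Phi>))"
    using R_trans[OF Qb_constant Q Qb_constant] CE_indifferent[OF Q] c by blast+
  then show ?thesis by (simp add: R_constant_iff)
qed

lemma R_iff_CE:
  assumes "\<Phi> \<in> Qb" "\<Psi> \<in> Qb"
  shows "R \<Phi> \<Psi> \<longleftrightarrow> CE \<Psi> \<le> CE \<Phi>"
proof -
  have "R \<Phi> \<Psi> \<longleftrightarrow> R (constant_fn (CE \<Phi>)) (constant_fn (CE \<Psi>))"
    using CE_indifferent[OF assms(1)] CE_indifferent[OF assms(2)]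
      R_trans[OF Qb_constant assms] R_trans[OF Qb_constant assms(2) Qb_constant]
      R_trans[OF assms(1) Qb_constant Qb_constant] R_trans[OF assms(1) Qb_constant assms(2)]
    by blast
  then show ?thesis by (simp add: R_constant_iff)
qed

lemma strict_iff_CE: "\<Phi> \<in> Qb \<Longrightarrow> \<Psi> \<in> Qb \<Longrightarrow> strict \<Phi> \<Psi> \<longleftrightarrow> CE \<Psi> < CE \<Phi>"
  unfolding strict_part_def using R_iff_CE by auto

text \<open>Dual independence extends from strict preference to indifference: replacing Phi by
  its certainty equivalent inside a mixture does not change the ranking. Every constant
  above c mixes to something strictly better, and the contour set is closed.\<close>
lemma mix_indifferent:
  assumes Q: "\<Phi> \<in> Qb" "\<Upsilon> \<in> Qb" and c: "R \<Phi> (constant_fn c)" "R (constant_fn c) \<Phi>"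
    and \<alpha>: "0 < \<alpha>" "\<alpha> < 1"
  shows "R (mix \<alpha> \<Phi> \<Upsilon>) (mix \<alpha> (constant_fn c) \<Upsilon>)" "R (mix \<alpha> (constant_fn c) \<Upsilon>) (mix \<alpha> \<Phi> \<Upsilon>)"
proof -
  have mixed: "mix \<alpha> \<Phi> \<Upsilon> \<in> Qb" using Qb_mix Q \<alpha> by auto
  have "{c<..} \<subseteq> {d. R (mix \<alpha> (constant_fn d) \<Upsilon>) (mix \<alpha> \<Phi> \<Upsilon>)}"
  proof
    fix d assume "d \<in> {c<..}"
    then have "strict (constant_fn d) \<Phi>"
      using strict_R_trans[OF Qb_constant Qb_constant Q(1) strict_constant c(2)] by simp
    then show "d \<in> {d. R (mix \<alpha> (constant_fn d) \<Upsilon>) (mix \<alpha> \<Phi> \<Upsilon>)}"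
      using strict_mix[OF Qb_constant Q \<alpha>] unfolding strict_part_def by blast
  qed
  then have "closure {c<..} \<subseteq> {d. R (mix \<alpha> (constant_fn d) \<Upsilon>) (mix \<alpha> \<Phi> \<Upsilon>)}"
    using line_contours_closed(1)[OF mixed Q(2)] \<alpha> by (intro closure_minimal) auto
  then show "R (mix \<alpha> (constant_fn c) \<Upsilon>) (mix \<alpha> \<Phi> \<Upsilon>)" by auto
  have "{..<c} \<subseteq> {d. R (mix \<alpha> \<Phi> \<Upsilon>) (mix \<alpha> (constant_fn d) \<Upsilon>)}"
  proof
    fix d assume "d \<in> {..<c}"
    then have "strict \<Phi> (constant_fn d)"
      using R_strict_trans[OF Q(1) Qb_constant Qb_constant c(1) strict_constant] by simp
    then show "d \<in> {d. R (mix \<alpha> \<Phi> \<Upsilon>) (mix \<alpha> (constant_fn d) \<Upsilon>)}"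
      using strict_mix[OF Q(1) Qb_constant Q(2) \<alpha>] unfolding strict_part_def by blast
  qed
  then have "closure {..<c} \<subseteq> {d. R (mix \<alpha> \<Phi> \<Upsilon>) (mix \<alpha> (constant_fn d) \<Upsilon>)}"
    using line_contours_closed(2)[OF mixed Q(2)] \<alpha> by (intro closure_minimal) auto
  then show "R (mix \<alpha> \<Phi> \<Upsilon>) (mix \<alpha> (constant_fn c) \<Upsilon>)" by auto
qed

text \<open>CE is affine on mixtures: substitute both components by their certainty equivalents.\<close>
lemma CE_mix:
  assumes Q: "\<Phi> \<in> Qb" "\<Psi> \<in> Qb" and \<alpha>: "0 < \<alpha>" "\<alpha> < 1"
  shows "CE (mix \<alpha> \<Phi> \<Psi>) = \<alpha> * CE \<Phi> + (1 - \<alpha>) * CE \<Psi>"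
proof -
  define a b where "a = CE \<Phi>" and "b = CE \<Psi>"
  have a: "R \<Phi> (constant_fn a)" "R (constant_fn a) \<Phi>" and b: "R \<Psi> (constant_fn b)" "R (constant_fn b) \<Psi>"
    using CE_indifferent[OF Q(1)] CE_indifferent[OF Q(2)] by (auto simp: a_def b_def)
  have \<beta>: "0 < 1 - \<alpha>" "1 - \<alpha> < 1" using \<alpha> by auto
  have swap: "mix \<alpha> (constant_fn a) \<Psi> = mix (1 - \<alpha>) \<Psi> (constant_fn a)"
    by (simp add: mix_def fun_eq_iff algebra_simps)
  have target: "mix (1 - \<alpha>) (constant_fn b) (constant_fn a) = constant_fn (\<alpha> * a + (1 - \<alpha>) * b)"
    by (simp add: mix_constants algebra_simps)
  note step1 = mix_indifferent[OF Q a \<alpha>, unfolded swap]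
  note step2 = mix_indifferent[OF Q(2) Qb_constant[of a] b \<beta>, unfolded target]
  have X: "mix \<alpha> \<Phi> \<Psi> \<in> Qb" and Y: "mix (1 - \<alpha>) \<Psi> (constant_fn a) \<in> Qb"
    using Qb_mix Q Qb_constant \<alpha> by auto
  have "R (mix \<alpha> \<Phi> \<Psi>) (constant_fn (\<alpha> * a + (1 - \<alpha>) * b))"
    by (rule R_trans[OF X Y Qb_constant step1(1) step2(1)])
  moreover have "R (constant_fn (\<alpha> * a + (1 - \<alpha>) * b)) (mix \<alpha> \<Phi> \<Psi>)"
    by (rule R_trans[OF Qb_constant Y X step2(2) step1(2)])
  ultimately show ?thesis using CE_unique[OF X] by (simp add: a_def b_def)
qed

text \<open>Affinity on mixtures yields additivity and positive homogeneity of CE.\<close>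
lemma CE_zero: "CE (\<lambda>x. 0) = 0"
  using CE_unique[OF Qb_zero] R_refl[OF Qb_zero] by (simp add: constant_fn_zero)

lemma CE_scale:
  assumes Q: "\<Phi> \<in> Qb" and "c \<ge> 0"
  shows "CE (\<lambda>x. c * \<Phi> x) = c * CE \<Phi>"
proof -
  have shrink: "CE (\<lambda>x. t * \<Psi> x) = t * CE \<Psi>" if "\<Psi> \<in> Qb" "0 < t" "t < 1" for \<Psi> t
    using CE_mix[OF that(1) Qb_zero that(2,3)] CE_zero by (simp add: mix_def)
  consider "c = 0" | "c = 1" | "0 < c \<and> c < 1" | "c > 1" using \<open>c \<ge> 0\<close> by linarith
  then show ?thesis
  proof cases
    case 4
    have "CE \<Phi> = CE (\<lambda>x. (1 / c) * (c * \<Phi> x))" using 4 by simp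
    also have "\<dots> = (1 / c) * CE (\<lambda>x. c * \<Phi> x)"
      using 4 by (intro shrink Qb_scale Q) auto
    finally show ?thesis using 4 by (simp add: field_simps)
  qed (use shrink[OF Q] CE_zero in auto)
qed

lemma CE_add:
  assumes "\<Phi> \<in> Qb" "\<Psi> \<in> Qb"
  shows "CE (\<lambda>x. \<Phi> x + \<Psi> x) = CE \<Phi> + CE \<Psi>"
proof -
  have "(\<lambda>x. \<Phi> x + \<Psi> x) = (\<lambda>x. 2 * mix (1/2) \<Phi> \<Psi> x)" by (simp add: mix_def fun_eq_iff)
  then show ?thesis
    using CE_scale[OF Qb_mix[OF assms], of "1/2" 2] CE_mix[OF assms, of "1/2"] by simp
qed

lemma CE_monotone_additive: "monotone_additive_functional CE"
  by unfold_locales (auto simp: CE_add CE_scale R_iff_CE[symmetric] intro: R_mono)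

end

theorem mainTheorem10:
  fixes R :: "(real \<Rightarrow> real) \<Rightarrow> (real \<Rightarrow> real) \<Rightarrow> bool"
  assumes "total_preorder_on Qb R"
    and "pref_continuous R"
    and "pref_monotonic R"
    and "dual_independence R"
  shows "\<exists>\<mu>. fa_measure \<mu> \<and>
    (\<forall>\<Phi>\<in>Qb. \<forall>\<Psi>\<in>Qb. strict_part R \<Phi> \<Psi> \<longleftrightarrow> fa_integral \<mu> \<Phi> > fa_integral \<mu> \<Psi>)"
proof -
  interpret preference R using assms by unfold_locales
  show ?thesis
  proof (cases "strict_part R (constant_fn 1) (constant_fn 0)")
    case True
    interpret nondegenerate_preference R by unfold_locales (rule True)
    obtain \<mu> where "fa_measure \<mu>" "\<forall>\<Phi>\<in>Qb. fa_integral \<mu> \<Phi> = CE \<Phi>"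
      using monotone_additive_functional.integral_representation[OF CE_monotone_additive] by blast
    then show ?thesis using strict_iff_CE by auto
  next
    case False
    interpret zero: monotone_additive_functional "\<lambda>_. 0" by unfold_locales auto
    obtain \<mu> where "fa_measure \<mu>" "\<forall>\<Phi>\<in>Qb. fa_integral \<mu> \<Phi> = 0"
      using zero.integral_representation by blast
    then show ?thesis using degenerate_indifference[OF False] by auto
  qed
qed

end
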